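(* For every integer $F\ge12$, $s(F,4,3)=4F-30$.
   Context: A placement delivery array $S$-PDA$(F,K,Z)$ is an $F\times K$ array $R=(r_{j,k})$, $1\le j\le F$, $1\le k\le K$, over a finite set $S$ such that: (1) each cell is either empty or contains an element of $S$; (2) each column contains exactly $Z$ empty cells; (3) each element of $S$ occurs at most once in each row and at most once in each column; (4) if two distinct nonempty cells satisfy $r_{j_1,k_1}=r_{j_2,k_2}=t\in S$, then the cells $r_{j_1,k_2}$ and $r_{j_2,k_1}$ are empty. For integers $F,K\ge1$, $0\le Z\le F$, define $s(F,K,Z)=\min\{|S| : \text{there exists an } S\text{-PDA}(F,K,Z)\}$. *)

theory Defs
  imports Main
begin

text \<open>An F x K array over S: cells indexed by rows 1..F and columns 1..K;
  None = empty cell, Some t = cell containing t.\<close>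

definition is_PDA :: "'a set \<Rightarrow> nat \<Rightarrow> nat \<Rightarrow> nat \<Rightarrow> (nat \<Rightarrow> nat \<Rightarrow> 'a option) \<Rightarrow> bool" where
  "is_PDA S F K Z R \<longleftrightarrow>
     finite S \<and>
     (\<forall>j\<in>{1..F}. \<forall>k\<in>{1..K}. \<forall>t. R j k = Some t \<longrightarrow> t \<in> S) \<and>
     (\<forall>k\<in>{1..K}. card {j\<in>{1..F}. R j k = None} = Z) \<and>
     (\<forall>t\<in>S. \<forall>j\<in>{1..F}. \<forall>k1\<in>{1..K}. \<forall>k2\<in>{1..K}.
         R j k1 = Some t \<and> R j k2 = Some t \<longrightarrow> k1 = k2) \<and>
     (\<forall>t\<in>S. \<forall>k\<in>{1..K}. \<forall>j1\<in>{1..F}. \<forall>j2\<in>{1..F}.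
         R j1 k = Some t \<and> R j2 k = Some t \<longrightarrow> j1 = j2) \<and>
     (\<forall>j1\<in>{1..F}. \<forall>j2\<in>{1..F}. \<forall>k1\<in>{1..K}. \<forall>k2\<in>{1..K}. \<forall>t.
         (j1, k1) \<noteq> (j2, k2) \<and> R j1 k1 = Some t \<and> R j2 k2 = Some t \<longrightarrow>
           R j1 k2 = None \<and> R j2 k1 = None)"

text \<open>s(F,K,Z): minimum size of a symbol set admitting a PDA. Symbols are
  taken from nat w.l.o.g. (any finite symbol set can be relabelled).\<close>

definition s_PDA :: "nat \<Rightarrow> nat \<Rightarrow> nat \<Rightarrow> nat" where
  "s_PDA F K Z = (LEAST n. \<exists>(S::nat set) R. is_PDA S F K Z R \<and> card S = n)"

end

theory Submission
  imports Defs "HOL-Library.Countable"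
begin

text \<open>
  Lower bound: the \<open>K (F - Z)\<close> filled cells are shared out among the symbols. A symbol
  occurring \<open>o\<close> times yields \<open>o (o - 1)\<close> ordered pairs of distinct cells, and the map sending
  such a pair \<open>(j1, k1), (j2, k2)\<close> to the empty cell \<open>(j1, k2)\<close> and the column \<open>k1\<close> is
  injective, so \<open>\<Sum> o (o - 1) \<le> K Z (K - 1)\<close>. Together with \<open>2 o \<le> 2 + o (o - 1)\<close> this gives
  \<open>2 |S| \<ge> 2 K (F - Z) - K Z (K - 1)\<close>.

  Upper bound: for \<open>F \<ge> K Z\<close>, the Maddah-Ali--Niesen array for \<open>t = 1\<close> with every row repeated
  \<open>Z\<close> times has \<open>K Z\<close> rows and \<open>Z (K choose 2)\<close> symbols, which meets the bound, and the remaining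
  \<open>F - K Z\<close> rows are filled with fresh symbols. Hence \<open>s(F, K, Z) = Z (K choose 2) + K (F - K Z)\<close>,
  which is \<open>4 F - 30\<close> for \<open>K = 4\<close>, \<open>Z = 3\<close>.
\<close>

lemma is_PDAI:
  assumes "finite S"
    and "\<And>j k t. j \<in> {1..F} \<Longrightarrow> k \<in> {1..K} \<Longrightarrow> R j k = Some t \<Longrightarrow> t \<in> S"
    and "\<And>k. k \<in> {1..K} \<Longrightarrow> card {j \<in> {1..F}. R j k = None} = Z"
    and "\<And>j k1 k2 t. j \<in> {1..F} \<Longrightarrow> k1 \<in> {1..K} \<Longrightarrow> k2 \<in> {1..K} \<Longrightarrow>
      R j k1 = Some t \<Longrightarrow> R j k2 = Some t \<Longrightarrow> k1 = k2"
    and "\<And>j1 j2 k t. j1 \<in> {1..F} \<Longrightarrow> j2 \<in> {1..F} \<Longrightarrow> k \<in> {1..K} \<Longrightarrow>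
      R j1 k = Some t \<Longrightarrow> R j2 k = Some t \<Longrightarrow> j1 = j2"
    and "\<And>j1 j2 k1 k2 t. j1 \<in> {1..F} \<Longrightarrow> j2 \<in> {1..F} \<Longrightarrow> k1 \<in> {1..K} \<Longrightarrow> k2 \<in> {1..K} \<Longrightarrow>
      (j1, k1) \<noteq> (j2, k2) \<Longrightarrow> R j1 k1 = Some t \<Longrightarrow> R j2 k2 = Some t \<Longrightarrow> R j1 k2 = None"
  shows "is_PDA S F K Z R"
  unfolding is_PDA_def
proof (intro conjI ballI allI impI)
  show "finite S"
    by (fact assms(1))
next
  fix j k t
  assume "j \<in> {1..F}" "k \<in> {1..K}" "R j k = Some t"
  then show "t \<in> S"
    by (fact assms(2))
next
  fix k
  assume "k \<in> {1..K}"
  then show "card {j \<in> {1..F}. R j k = None} = Z"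
    by (fact assms(3))
next
  fix t j k1 k2
  assume "j \<in> {1..F}" "k1 \<in> {1..K}" "k2 \<in> {1..K}" "R j k1 = Some t \<and> R j k2 = Some t"
  then show "k1 = k2"
    using assms(4) by blast
next
  fix t k j1 j2
  assume "k \<in> {1..K}" "j1 \<in> {1..F}" "j2 \<in> {1..F}" "R j1 k = Some t \<and> R j2 k = Some t"
  then show "j1 = j2"
    using assms(5) by blast
next
  fix j1 j2 k1 k2 t
  assume cells: "j1 \<in> {1..F}" "j2 \<in> {1..F}" "k1 \<in> {1..K}" "k2 \<in> {1..K}"
    and same: "(j1, k1) \<noteq> (j2, k2) \<and> R j1 k1 = Some t \<and> R j2 k2 = Some t"
  show "R j1 k2 = None"
    using assms(6)[OF cells] same by blast
  show "R j2 k1 = None"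
    using assms(6)[of j2 j1 k2 k1 t] cells same by blast
qed

lemma is_PDA_finite: "is_PDA S F K Z R \<Longrightarrow> finite S"
  unfolding is_PDA_def by blast

lemma is_PDA_symbol_in:
  "is_PDA S F K Z R \<Longrightarrow> j \<in> {1..F} \<Longrightarrow> k \<in> {1..K} \<Longrightarrow> R j k = Some t \<Longrightarrow> t \<in> S"
  unfolding is_PDA_def by blast

lemma is_PDA_row_unique:
  "is_PDA S F K Z R \<Longrightarrow> j \<in> {1..F} \<Longrightarrow> k1 \<in> {1..K} \<Longrightarrow> k2 \<in> {1..K} \<Longrightarrow>
    R j k1 = Some t \<Longrightarrow> R j k2 = Some t \<Longrightarrow> k1 = k2"
  unfolding is_PDA_def by blast

lemma is_PDA_column_unique:
  "is_PDA S F K Z R \<Longrightarrow> j1 \<in> {1..F} \<Longrightarrow> j2 \<in> {1..F} \<Longrightarrow> k \<in> {1..K} \<Longrightarrow>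
    R j1 k = Some t \<Longrightarrow> R j2 k = Some t \<Longrightarrow> j1 = j2"
  unfolding is_PDA_def by blast

lemma is_PDA_cross_empty:
  "is_PDA S F K Z R \<Longrightarrow> j1 \<in> {1..F} \<Longrightarrow> j2 \<in> {1..F} \<Longrightarrow> k1 \<in> {1..K} \<Longrightarrow> k2 \<in> {1..K} \<Longrightarrow>
    (j1, k1) \<noteq> (j2, k2) \<Longrightarrow> R j1 k1 = Some t \<Longrightarrow> R j2 k2 = Some t \<Longrightarrow> R j1 k2 = None"
  unfolding is_PDA_def by blast

lemma is_PDA_card_column_empty:
  "is_PDA S F K Z R \<Longrightarrow> k \<in> {1..K} \<Longrightarrow> card {j \<in> {1..F}. R j k = None} = Z"
  unfolding is_PDA_def by blast

section \<open>The counting bound\<close>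

definition empty_cells :: "nat \<Rightarrow> nat \<Rightarrow> (nat \<Rightarrow> nat \<Rightarrow> 'a option) \<Rightarrow> (nat \<times> nat) set" where
  "empty_cells F K R = {(j, k). j \<in> {1..F} \<and> k \<in> {1..K} \<and> R j k = None}"

definition symbol_cells :: "nat \<Rightarrow> nat \<Rightarrow> (nat \<Rightarrow> nat \<Rightarrow> 'a option) \<Rightarrow> 'a \<Rightarrow> (nat \<times> nat) set" where
  "symbol_cells F K R t = {(j, k). j \<in> {1..F} \<and> k \<in> {1..K} \<and> R j k = Some t}"

lemma mem_symbol_cells [simp]:
  "(j, k) \<in> symbol_cells F K R t \<longleftrightarrow> j \<in> {1..F} \<and> k \<in> {1..K} \<and> R j k = Some t"
  by (simp add: symbol_cells_def)

lemma empty_cells_subset: "empty_cells F K R \<subseteq> {1..F} \<times> {1..K}"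
  by (auto simp: empty_cells_def)

lemma symbol_cells_subset: "symbol_cells F K R t \<subseteq> {1..F} \<times> {1..K}"
  by (auto simp: symbol_cells_def)

lemma finite_symbol_cells [simp]: "finite (symbol_cells F K R t)"
  by (rule finite_subset[OF symbol_cells_subset]) simp

lemma finite_empty_cells [simp]: "finite (empty_cells F K R)"
  by (rule finite_subset[OF empty_cells_subset]) simp

lemma card_empty_cells:
  assumes "is_PDA S F K Z R"
  shows "card (empty_cells F K R) = K * Z"
proof -
  have "empty_cells F K R = (\<Union>k\<in>{1..K}. {j \<in> {1..F}. R j k = None} \<times> {k})"
    by (auto simp: empty_cells_def)
  then have "card (empty_cells F K R) = (\<Sum>k\<in>{1..K}. card ({j \<in> {1..F}. R j k = None} \<times> {k}))"
    by (simp add: card_UN_disjoint disjoint_iff)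
  also have "\<dots> = (\<Sum>k\<in>{1..K}. Z)"
    using is_PDA_card_column_empty[OF assms] by (intro sum.cong) auto
  finally show ?thesis by simp
qed

lemma sum_card_symbol_cells:
  assumes "is_PDA S F K Z R"
  shows "(\<Sum>t\<in>S. card (symbol_cells F K R t)) + K * Z = F * K"
proof -
  let ?grid = "{1..F} \<times> {1..K}"
  have "finite S"
    by (rule is_PDA_finite[OF assms])
  moreover have "symbol_cells F K R s \<inter> symbol_cells F K R t = {}" if "s \<noteq> t" for s t
    using that by (auto simp: symbol_cells_def)
  ultimately have "(\<Sum>t\<in>S. card (symbol_cells F K R t)) = card (\<Union>t\<in>S. symbol_cells F K R t)"
    by (simp add: card_UN_disjoint)
  also have "(\<Union>t\<in>S. symbol_cells F K R t) = ?grid - empty_cells F K R"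
  proof (intro equalityI subsetI)
    fix c
    assume "c \<in> ?grid - empty_cells F K R"
    then obtain j k t where "c = (j, k)" "j \<in> {1..F}" "k \<in> {1..K}" "R j k = Some t"
      by (cases c) (auto simp: empty_cells_def)
    then show "c \<in> (\<Union>t\<in>S. symbol_cells F K R t)"
      using is_PDA_symbol_in[OF assms] by auto
  qed (auto simp: empty_cells_def)
  also have "card (?grid - empty_cells F K R) = card ?grid - card (empty_cells F K R)"
    by (rule card_Diff_subset[OF finite_empty_cells empty_cells_subset])
  moreover have "card (empty_cells F K R) \<le> card ?grid"
    by (rule card_mono[OF _ empty_cells_subset]) simp
  ultimately show ?thesis
    by (simp add: card_empty_cells[OF assms] card_cartesian_product)
qed

lemma card_off_diagonal:
  assumes "finite A"
  shows "card (A \<times> A - Id_on A) = card A * (card A - 1)"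
proof -
  have diag: "Id_on A = (\<lambda>x. (x, x)) ` A"
    unfolding Id_on_def by blast
  have "card (Id_on A) = card A"
    unfolding diag by (rule card_image) (simp add: inj_on_def)
  moreover have "finite (Id_on A)"
    unfolding diag using assms by simp
  ultimately have "card (A \<times> A - Id_on A) = card A * card A - card A"
    by (simp add: card_Diff_subset Id_on_subset_Times card_cartesian_product)
  then show ?thesis
    by (simp add: diff_mult_distrib2)
qed

definition same_symbol_pairs ::
    "'a set \<Rightarrow> nat \<Rightarrow> nat \<Rightarrow> (nat \<Rightarrow> nat \<Rightarrow> 'a option) \<Rightarrow> ((nat \<times> nat) \<times> (nat \<times> nat)) set" where
  "same_symbol_pairs S F K R =
    (\<Union>t\<in>S. symbol_cells F K R t \<times> symbol_cells F K R t - Id_on (symbol_cells F K R t))"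

lemma mem_same_symbol_pairs:
  "((j1, k1), (j2, k2)) \<in> same_symbol_pairs S F K R \<longleftrightarrow>
    (\<exists>t\<in>S. (j1, k1) \<noteq> (j2, k2) \<and> j1 \<in> {1..F} \<and> j2 \<in> {1..F} \<and> k1 \<in> {1..K} \<and> k2 \<in> {1..K} \<and>
      R j1 k1 = Some t \<and> R j2 k2 = Some t)"
  by (auto simp: same_symbol_pairs_def Id_on_iff)

lemma card_same_symbol_pairs:
  assumes "finite S"
  shows "card (same_symbol_pairs S F K R) =
    (\<Sum>t\<in>S. card (symbol_cells F K R t) * (card (symbol_cells F K R t) - 1))"
proof -
  let ?C = "symbol_cells F K R"
  have "(?C s \<times> ?C s - Id_on (?C s)) \<inter> (?C t \<times> ?C t - Id_on (?C t)) = {}" if "s \<noteq> t" for s t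
    using that by (auto simp: symbol_cells_def)
  with assms show ?thesis
    by (simp add: same_symbol_pairs_def card_UN_disjoint card_off_diagonal)
qed

text \<open>The row \<open>j2\<close> is recovered from \<open>((j1, k2), k1)\<close> because the symbol \<open>R j1 k1\<close> occurs at
  most once in column \<open>k2\<close>.\<close>

lemma inj_on_same_symbol_pairs:
  assumes pda: "is_PDA S F K Z R"
  shows "inj_on (\<lambda>((j1, k1), (j2, k2)). ((j1, k2), k1)) (same_symbol_pairs S F K R)"
proof (rule inj_onI)
  fix x y
  assume xy: "x \<in> same_symbol_pairs S F K R" "y \<in> same_symbol_pairs S F K R"
    and eq: "(\<lambda>((j1, k1), (j2, k2)). ((j1, k2), k1)) x = (\<lambda>((j1, k1), (j2, k2)). ((j1, k2), k1)) y"
  obtain j1 k1 j2 k2 j2' where x: "x = ((j1, k1), (j2, k2))" and y: "y = ((j1, k1), (j2', k2))"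
    using eq by (cases x, cases y) auto
  obtain t t' where "R j1 k1 = Some t" "R j2 k2 = Some t" "R j1 k1 = Some t'" "R j2' k2 = Some t'"
    and "j2 \<in> {1..F}" "j2' \<in> {1..F}" "k2 \<in> {1..K}"
    using xy unfolding x y mem_same_symbol_pairs by blast
  then have "j2 = j2'"
    using is_PDA_column_unique[OF pda, of j2 j2' k2 t] by simp
  then show "x = y"
    by (simp add: x y)
qed

lemma same_symbol_pairs_image_subset:
  assumes pda: "is_PDA S F K Z R"
  shows "(\<lambda>((j1, k1), (j2, k2)). ((j1, k2), k1)) ` same_symbol_pairs S F K R
    \<subseteq> (SIGMA e:empty_cells F K R. {1..K} - {snd e})"
proof
  fix z
  assume "z \<in> (\<lambda>((j1, k1), (j2, k2)). ((j1, k2), k1)) ` same_symbol_pairs S F K R"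
  then obtain j1 k1 j2 k2 where z: "z = ((j1, k2), k1)"
    and "((j1, k1), (j2, k2)) \<in> same_symbol_pairs S F K R"
    by auto
  then obtain t where
    cells: "(j1, k1) \<noteq> (j2, k2)" "j1 \<in> {1..F}" "j2 \<in> {1..F}" "k1 \<in> {1..K}" "k2 \<in> {1..K}"
      "R j1 k1 = Some t" "R j2 k2 = Some t"
    unfolding mem_same_symbol_pairs by blast
  then have "R j1 k2 = None"
    using is_PDA_cross_empty[OF pda] by blast
  with cells show "z \<in> (SIGMA e:empty_cells F K R. {1..K} - {snd e})"
    by (auto simp: z empty_cells_def)
qed

lemma card_same_symbol_pairs_le:
  assumes pda: "is_PDA S F K Z R"
  shows "card (same_symbol_pairs S F K R) \<le> K * Z * (K - 1)"
proof -
  let ?D = "SIGMA e:empty_cells F K R. {1..K} - {snd e}"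
  have "card (same_symbol_pairs S F K R) \<le> card ?D"
    using inj_on_same_symbol_pairs[OF pda] same_symbol_pairs_image_subset[OF pda]
    by (rule card_inj_on_le) simp
  also have "card ?D = (\<Sum>e\<in>empty_cells F K R. card ({1..K} - {snd e}))"
    by (rule card_SigmaI) auto
  also have "\<dots> = (\<Sum>e\<in>empty_cells F K R. K - 1)"
    by (intro sum.cong) (auto simp: card_Diff_singleton dest: subsetD[OF empty_cells_subset])
  finally show ?thesis
    by (simp add: card_empty_cells[OF pda])
qed

lemma double_le_two_plus_pronic: "2 * n \<le> 2 + n * (n - 1)" for n :: nat
  by (cases n) auto

theorem is_PDA_card_lower_bound:
  assumes "is_PDA S F K Z R"
  shows "2 * (F * K) \<le> 2 * card S + K * Z * (K + 1)"
proof -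
  let ?occ = "\<lambda>t. card (symbol_cells F K R t)"
  have "2 * (F * K) = (\<Sum>t\<in>S. 2 * ?occ t) + 2 * (K * Z)"
    by (simp add: sum_card_symbol_cells[OF assms, symmetric] sum_distrib_left)
  also have "\<dots> \<le> (\<Sum>t\<in>S. 2 + ?occ t * (?occ t - 1)) + 2 * (K * Z)"
    by (intro add_right_mono sum_mono double_le_two_plus_pronic)
  also have "\<dots> = 2 * card S + (\<Sum>t\<in>S. ?occ t * (?occ t - 1)) + 2 * (K * Z)"
    by (simp only: sum.distrib sum_constant) (simp add: mult.commute)
  also have "\<dots> \<le> 2 * card S + K * Z * (K - 1) + 2 * (K * Z)"
    using card_same_symbol_pairs_le[OF assms] card_same_symbol_pairs[OF is_PDA_finite[OF assms]] by simp
  also have "\<dots> = 2 * card S + K * Z * (K + 1)"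
    by (cases K) (simp_all add: algebra_simps)
  finally show ?thesis .
qed

lemma is_PDA_relabel:
  assumes pda: "is_PDA S F K Z R" and inj: "inj_on g S"
  shows "is_PDA (g ` S) F K Z (\<lambda>j k. map_option g (R j k))"
proof (rule is_PDAI)
  have common: "\<exists>a. R j1 k1 = Some a \<and> R j2 k2 = Some a"
    if cells: "j1 \<in> {1..F}" "k1 \<in> {1..K}" "j2 \<in> {1..F}" "k2 \<in> {1..K}"
      and images: "map_option g (R j1 k1) = Some t" "map_option g (R j2 k2) = Some t" for j1 k1 j2 k2 t
  proof -
    obtain a b where ab: "R j1 k1 = Some a" "R j2 k2 = Some b" "g a = g b"
      using images by auto
    moreover have "a \<in> S" "b \<in> S"
      using ab cells is_PDA_symbol_in[OF pda] by blast+
    ultimately show ?thesis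
      using inj_onD[OF inj] by blast
  qed
  show "finite (g ` S)"
    using is_PDA_finite[OF pda] by simp
  show "t \<in> g ` S" if "j \<in> {1..F}" "k \<in> {1..K}" "map_option g (R j k) = Some t" for j k t
    using that is_PDA_symbol_in[OF pda] by auto
  show "card {j \<in> {1..F}. map_option g (R j k) = None} = Z" if "k \<in> {1..K}" for k
    using is_PDA_card_column_empty[OF pda that] by simp
  show "k1 = k2"
    if "j \<in> {1..F}" "k1 \<in> {1..K}" "k2 \<in> {1..K}"
      "map_option g (R j k1) = Some t" "map_option g (R j k2) = Some t" for j k1 k2 t
    using that common[of j k1 j k2 t] is_PDA_row_unique[OF pda, of j k1 k2] by blast
  show "j1 = j2"
    if "j1 \<in> {1..F}" "j2 \<in> {1..F}" "k \<in> {1..K}"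
      "map_option g (R j1 k) = Some t" "map_option g (R j2 k) = Some t" for j1 j2 k t
    using that common[of j1 k j2 k t] is_PDA_column_unique[OF pda, of j1 j2 k] by blast
  show "map_option g (R j1 k2) = None"
    if "j1 \<in> {1..F}" "j2 \<in> {1..F}" "k1 \<in> {1..K}" "k2 \<in> {1..K}" "(j1, k1) \<noteq> (j2, k2)"
      "map_option g (R j1 k1) = Some t" "map_option g (R j2 k2) = Some t" for j1 j2 k1 k2 t
    using that common[of j1 k1 j2 k2 t] is_PDA_cross_empty[OF pda, of j1 j2 k1 k2] by auto
qed

lemma s_PDA_eqI:
  fixes S :: "'a::countable set"
  assumes pda: "is_PDA S F K Z R"
    and minimal: "\<And>(S' :: nat set) R'. is_PDA S' F K Z R' \<Longrightarrow> card S \<le> card S'"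
  shows "s_PDA F K Z = card S"
  unfolding s_PDA_def
proof (rule Least_equality)
  have "is_PDA (to_nat ` S) F K Z (\<lambda>j k. map_option to_nat (R j k))"
    by (rule is_PDA_relabel[OF pda inj_on_to_nat])
  moreover have "card (to_nat ` S) = card S"
    by (simp add: card_image)
  ultimately show "\<exists>(S' :: nat set) R'. is_PDA S' F K Z R' \<and> card S' = card S"
    by blast
next
  fix n
  assume "\<exists>(S' :: nat set) R'. is_PDA S' F K Z R' \<and> card S' = n"
  then show "card S \<le> n"
    using minimal by blast
qed

section \<open>The construction\<close>

lemma min_max_eq_iff:
  fixes a c a' c' :: "'a::linorder"
  shows "min a c = min a' c' \<and> max a c = max a' c' \<longleftrightarrow> (a = a' \<and> c = c') \<or> (a = c' \<and> c = a')"
  by (auto simp: min_def max_def)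

lemma finite_strict_pairs [simp]: "finite {(a, c). a < c \<and> c < (K::nat)}"
  by (rule finite_subset[of _ "{..<K} \<times> {..<K}"]) auto

lemma card_strict_pairs: "card {(a, c). a < c \<and> c < K} = K choose 2"
proof (induction K)
  case 0
  then show ?case
    by simp
next
  case (Suc K)
  have "{(a, c). a < c \<and> c < Suc K} = {(a, c). a < c \<and> c < K} \<union> {..<K} \<times> {K}"
    by auto
  then have "card {(a, c). a < c \<and> c < Suc K} = card {(a, c). a < c \<and> c < K} + card ({..<K} \<times> {K})"
    by (simp add: card_Un_disjoint disjoint_iff)
  then show ?case
    by (simp add: Suc.IH numeral_2_eq_2)
qed

lemma two_choose_two_plus_self: "2 * (n choose 2) + n = n * n"
  by (induction n) (simp_all add: numeral_2_eq_2)

text \<open>The Maddah-Ali--Niesen array for \<open>t = 1\<close> (rows and columns indexed by the \<open>K\<close> users, the cell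
  \<open>(a, c)\<close> holding the pair \<open>{a, c}\<close> off the diagonal), with each row repeated \<open>Z\<close> times: row \<open>j\<close>
  is copy \<open>(j - 1) mod Z\<close> of user row \<open>(j - 1) div Z\<close>, and the copy index keeps the symbols of
  different copies apart.\<close>

definition mn_block :: "nat \<Rightarrow> nat \<Rightarrow> nat \<Rightarrow> ((nat \<times> nat) \<times> nat) option" where
  "mn_block Z j k = (let a = (j - 1) div Z; c = k - 1 in
     if c = a then None else Some ((min a c, max a c), (j - 1) mod Z))"

definition mn_block_symbols :: "nat \<Rightarrow> nat \<Rightarrow> ((nat \<times> nat) \<times> nat) set" where
  "mn_block_symbols K Z = {(a, c). a < c \<and> c < K} \<times> {..<Z}"

lemma finite_mn_block_symbols [simp]: "finite (mn_block_symbols K Z)"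
  by (simp add: mn_block_symbols_def)

lemma card_mn_block_symbols: "card (mn_block_symbols K Z) = Z * (K choose 2)"
  by (simp add: mn_block_symbols_def card_cartesian_product card_strict_pairs)

lemma mn_block_eq_Some:
  "mn_block Z j k = Some t \<longleftrightarrow>
    k - 1 \<noteq> (j - 1) div Z \<and>
    t = ((min ((j - 1) div Z) (k - 1), max ((j - 1) div Z) (k - 1)), (j - 1) mod Z)"
  by (auto simp: mn_block_def Let_def)

lemma mn_block_eq_None: "mn_block Z j k = None \<longleftrightarrow> k - 1 = (j - 1) div Z"
  by (simp add: mn_block_def Let_def)

lemma row_eq_of_div_mod_eq:
  fixes j1 j2 Z :: nat
  assumes "1 \<le> j1" "1 \<le> j2" "(j1 - 1) div Z = (j2 - 1) div Z" "(j1 - 1) mod Z = (j2 - 1) mod Z"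
  shows "j1 = j2"
proof -
  have "j1 - 1 = j2 - 1"
    by (metis assms(3,4) div_mult_mod_eq)
  with assms(1,2) show ?thesis
    by simp
qed

lemma mn_block_column_empty:
  assumes "k \<in> {1..K}"
  shows "{j \<in> {1..K * Z}. mn_block Z j k = None} = (\<lambda>i. Z * (k - 1) + i + 1) ` {..<Z}"
proof (intro equalityI subsetI)
  fix j
  assume "j \<in> {j \<in> {1..K * Z}. mn_block Z j k = None}"
  then have j: "1 \<le> j" "j \<le> K * Z" "(j - 1) div Z = k - 1"
    by (auto simp: mn_block_eq_None)
  then have "0 < Z"
    by (cases Z) auto
  moreover have "j = Z * ((j - 1) div Z) + (j - 1) mod Z + 1"
    using j(1) by (simp add: mult.commute)
  ultimately show "j \<in> (\<lambda>i. Z * (k - 1) + i + 1) ` {..<Z}"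
    using j(3) by (metis image_eqI lessThan_iff mod_less_divisor)
next
  fix j
  assume "j \<in> (\<lambda>i. Z * (k - 1) + i + 1) ` {..<Z}"
  then obtain i where i: "i < Z" "j = Z * (k - 1) + i + 1"
    by auto
  have "Z * (k - 1) + Z = k * Z"
    using assms by (cases k) (auto simp: algebra_simps)
  also have "\<dots> \<le> K * Z"
    using assms by simp
  finally have "Z * (k - 1) + Z \<le> K * Z" .
  moreover have "(Z * (k - 1) + i) div Z = k - 1"
    using i(1) by simp
  ultimately show "j \<in> {j \<in> {1..K * Z}. mn_block Z j k = None}"
    using i by (simp add: mn_block_eq_None)
qed

lemma mn_block_is_PDA: "is_PDA (mn_block_symbols K Z) (K * Z) K Z (mn_block Z)"
proof (rule is_PDAI)
  show "finite (mn_block_symbols K Z)"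
    by simp
  show "t \<in> mn_block_symbols K Z"
    if "j \<in> {1..K * Z}" "k \<in> {1..K}" "mn_block Z j k = Some t" for j k t
  proof -
    have "0 < Z"
      using that(1) by (cases Z) auto
    moreover have "(j - 1) div Z < K"
      using that(1) by (intro less_mult_imp_div_less) auto
    ultimately show ?thesis
      using that by (auto simp: mn_block_eq_Some mn_block_symbols_def min_def max_def)
  qed
  show "card {j \<in> {1..K * Z}. mn_block Z j k = None} = Z" if "k \<in> {1..K}" for k
    unfolding mn_block_column_empty[OF that] by (simp add: card_image inj_on_def)
  show "k1 = k2"
    if "j \<in> {1..K * Z}" "k1 \<in> {1..K}" "k2 \<in> {1..K}"
      "mn_block Z j k1 = Some t" "mn_block Z j k2 = Some t" for j k1 k2 t
    using that by (auto simp: mn_block_eq_Some min_max_eq_iff)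
  show "j1 = j2"
    if "j1 \<in> {1..K * Z}" "j2 \<in> {1..K * Z}" "k \<in> {1..K}"
      "mn_block Z j1 k = Some t" "mn_block Z j2 k = Some t" for j1 j2 k t
    using that row_eq_of_div_mod_eq[of j1 j2 Z] by (auto simp: mn_block_eq_Some min_max_eq_iff)
  show "mn_block Z j1 k2 = None"
    if "j1 \<in> {1..K * Z}" "j2 \<in> {1..K * Z}" "k1 \<in> {1..K}" "k2 \<in> {1..K}" "(j1, k1) \<noteq> (j2, k2)"
      "mn_block Z j1 k1 = Some t" "mn_block Z j2 k2 = Some t" for j1 j2 k1 k2 t
    using that row_eq_of_div_mod_eq[of j1 j2 Z]
    by (auto simp: mn_block_eq_Some mn_block_eq_None min_max_eq_iff)
qed

definition extend_fresh :: "nat \<Rightarrow> (nat \<Rightarrow> nat \<Rightarrow> 'a option) \<Rightarrow> nat \<Rightarrow> nat \<Rightarrow> ('a + nat \<times> nat) option" where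
  "extend_fresh F0 R j k = (if j \<le> F0 then map_option Inl (R j k) else Some (Inr (j, k)))"

lemma is_PDA_extend_fresh:
  assumes pda: "is_PDA S F0 K Z R" and "F0 \<le> F"
  shows "is_PDA (S <+> ({F0<..F} \<times> {1..K})) F K Z (extend_fresh F0 R)"
proof (rule is_PDAI)
  show "finite (S <+> ({F0<..F} \<times> {1..K}))"
    using is_PDA_finite[OF pda] by simp
  show "t \<in> S <+> ({F0<..F} \<times> {1..K})"
    if "j \<in> {1..F}" "k \<in> {1..K}" "extend_fresh F0 R j k = Some t" for j k t
    using that is_PDA_symbol_in[OF pda]
    by (auto simp: extend_fresh_def split: if_splits)
  show "card {j \<in> {1..F}. extend_fresh F0 R j k = None} = Z" if "k \<in> {1..K}" for k
  proof -
    have "{j \<in> {1..F}. extend_fresh F0 R j k = None} = {j \<in> {1..F0}. R j k = None}"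
      using \<open>F0 \<le> F\<close> by (auto simp: extend_fresh_def)
    then show ?thesis
      using is_PDA_card_column_empty[OF pda that] by simp
  qed
  show "k1 = k2"
    if "j \<in> {1..F}" "k1 \<in> {1..K}" "k2 \<in> {1..K}"
      "extend_fresh F0 R j k1 = Some t" "extend_fresh F0 R j k2 = Some t" for j k1 k2 t
    using that is_PDA_row_unique[OF pda, of j k1 k2]
    by (auto simp: extend_fresh_def split: if_splits)
  show "j1 = j2"
    if "j1 \<in> {1..F}" "j2 \<in> {1..F}" "k \<in> {1..K}"
      "extend_fresh F0 R j1 k = Some t" "extend_fresh F0 R j2 k = Some t" for j1 j2 k t
    using that is_PDA_column_unique[OF pda, of j1 j2 k]
    by (auto simp: extend_fresh_def split: if_splits)
  show "extend_fresh F0 R j1 k2 = None"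
    if "j1 \<in> {1..F}" "j2 \<in> {1..F}" "k1 \<in> {1..K}" "k2 \<in> {1..K}" "(j1, k1) \<noteq> (j2, k2)"
      "extend_fresh F0 R j1 k1 = Some t" "extend_fresh F0 R j2 k2 = Some t" for j1 j2 k1 k2 t
    using that is_PDA_cross_empty[OF pda, of j1 j2 k1 k2]
    by (auto simp: extend_fresh_def split: if_splits)
qed

theorem s_PDA_eq:
  assumes "K * Z \<le> F"
  shows "s_PDA F K Z = Z * (K choose 2) + K * (F - K * Z)"
proof -
  let ?S = "mn_block_symbols K Z <+> ({K * Z<..F} \<times> {1..K})"
  have pda: "is_PDA ?S F K Z (extend_fresh (K * Z) (mn_block Z))"
    by (rule is_PDA_extend_fresh[OF mn_block_is_PDA assms])
  have card: "card ?S = Z * (K choose 2) + K * (F - K * Z)"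
    by (simp add: card_Plus card_cartesian_product card_mn_block_symbols)
  have "s_PDA F K Z = card ?S"
  proof (rule s_PDA_eqI[OF pda])
    fix S' :: "nat set" and R'
    assume "is_PDA S' F K Z R'"
    then have "2 * (F * K) \<le> 2 * card S' + K * Z * (K + 1)"
      by (rule is_PDA_card_lower_bound)
    moreover obtain d where "F = K * Z + d"
      using assms le_Suc_ex by blast
    moreover have "Z * (2 * (K choose 2) + K) = Z * (K * K)"
      by (simp add: two_choose_two_plus_self)
    ultimately show "card ?S \<le> card S'"
      unfolding card by (simp add: algebra_simps)
  qed
  with card show ?thesis
    by simp
qed

theorem mainTheorem17:
  fixes F :: nat
  assumes "F \<ge> 12"
  shows "s_PDA F 4 3 = 4 * F - 30"
proof -
  have "s_PDA F 4 3 = 3 * (4 choose 2) + 4 * (F - 4 * 3)"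
    using assms by (intro s_PDA_eq) simp
  also have "(4::nat) choose 2 = 6"
    by (simp add: choose_two)
  finally show ?thesis
    using assms by simp
qed

end
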